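(* Let $k$ be a real number that is not an integer, and for $j\ge1$ let $\nu_j=\frac{d^{j-1}}{dk^{j-1}}\big(\pi\cot(k\pi)\big)$. Then for $n\in\mathbb{N}_0$, $$B_n(\nu_1,\nu_2,\dots,\nu_n)=\begin{cases}(-1)^j\pi^{2j}, & n=2j,\ j\in\mathbb{N}_0,\\ (-1)^j\pi^{2j+1}\cot(k\pi), & n=2j+1,\ j\in\mathbb{N}_0.\end{cases}$$
   Context: $B_n(s_1,\dots,s_n)$ denotes the complete Bell polynomial, defined by $\exp\big(\sum_{j\ge1}s_j t^j/j!\big)=\sum_{n\ge0}B_n(s_1,\dots,s_n)t^n/n!$; $B_0=1$. *)

theory Defs
  imports "HOL-Analysis.Analysis" "HOL-Computational_Algebra.Formal_Power_Series"
begin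

text \<open>The argument s is indexed from 1 (s 0 is ignored).\<close>
definition bell_complete :: "nat \<Rightarrow> (nat \<Rightarrow> real) \<Rightarrow> real" where
  "bell_complete n s =
     fact n * (fps_nth (fps_exp 1 oo Abs_fps (\<lambda>j. if j = 0 then 0 else s j / fact j)) n)"

end

theory Submission
  imports Defs "HOL-Complex_Analysis.Cauchy_Integral_Formula"
begin

text \<open>
  Put S x = sin (pi x) and f x = pi cot (pi x). Then S' = S f, so by the Leibniz rule
  S^(n+1) = sum_i (n choose i) S^(i) f^(n-i). Differentiating exp (A t) shows that the complete
  Bell polynomials obey the same recurrence, hence B_n(nu) = S^(n)(k) / S(k)
  = pi^n sin (pi k + n pi / 2) / sin (pi k), and the two cases are the parities of n.
  The smoothness of f off the integers, which the Leibniz rule needs, comes from the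
  Riccati equation f' = - pi^2 - f^2.
\<close>

lemma bell_complete_0 [simp]: "bell_complete 0 s = 1"
  by (simp add: bell_complete_def)

lemma bell_complete_Suc:
  "bell_complete (Suc n) s =
     (\<Sum>i\<le>n. of_nat (n choose i) * bell_complete i s * s (Suc (n - i)))"
proof -
  define A where "A = Abs_fps (\<lambda>j. if j = 0 then 0 else s j / fact j)"
  define E where "E = fps_exp (1::real) oo A"
  have "fps_deriv E = E * fps_deriv A"
    by (simp add: E_def A_def fps_compose_deriv)
  then have "fps_nth (fps_deriv E) n = fps_nth (E * fps_deriv A) n"
    by (rule arg_cong)
  moreover have "of_nat (Suc m) * (x / fact (Suc m)) = x / (fact m :: real)" for m x
    by (simp add: field_simps del: of_nat_Suc)
  ultimately have "of_nat (Suc n) * fps_nth E (Suc n) =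
      (\<Sum>i=0..n. fps_nth E i * (s (Suc (n - i)) / fact (n - i)))"
    by (simp add: fps_mult_nth A_def del: of_nat_Suc)
  then have "fact (Suc n) * fps_nth E (Suc n) =
      (\<Sum>i\<le>n. fact n * (fps_nth E i * (s (Suc (n - i)) / fact (n - i))))"
    unfolding atMost_atLeast0 sum_distrib_left[symmetric] fact_Suc by (simp only: mult_ac)
  also have "\<dots> = (\<Sum>i\<le>n. of_nat (n choose i) * (fact i * fps_nth E i) * s (Suc (n - i)))"
    by (intro sum.cong refl) (simp add: binomial_fact field_simps)
  finally show ?thesis
    by (simp add: bell_complete_def A_def E_def)
qed

definition higher_differentiable_on :: "nat \<Rightarrow> ('a::real_normed_field \<Rightarrow> 'a) \<Rightarrow> 'a set \<Rightarrow> bool" where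
  "higher_differentiable_on n f U \<longleftrightarrow>
     (\<forall>i<n. \<forall>x\<in>U. (deriv ^^ i) f field_differentiable (at x))"

lemma higher_differentiable_onD:
  assumes "higher_differentiable_on n f U" "i < n" "x \<in> U"
  shows "((deriv ^^ i) f has_field_derivative deriv ((deriv ^^ i) f) x) (at x)"
  using assms by (simp add: higher_differentiable_on_def DERIV_deriv_iff_field_differentiable)

lemma higher_differentiable_on_mono:
  "higher_differentiable_on n f U \<Longrightarrow> m \<le> n \<Longrightarrow> higher_differentiable_on m f U"
  by (simp add: higher_differentiable_on_def)

lemma higher_differentiable_on_Suc:
  "higher_differentiable_on (Suc n) f U \<longleftrightarrow>
     (\<forall>x\<in>U. f field_differentiable (at x)) \<and> higher_differentiable_on n (deriv f) U"
  unfolding higher_differentiable_on_def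
  by (auto simp: less_Suc_eq_0_disj funpow_Suc_right simp del: funpow.simps)

lemma higher_deriv_eq_on_open:
  assumes "open U" "\<And>y. y \<in> U \<Longrightarrow> f y = g y" "x \<in> U"
  shows "(deriv ^^ n) f x = (deriv ^^ n) g x"
  using assms by (intro higher_deriv_cong_ev) (auto elim!: eventually_mono[OF eventually_nhds_in_open])

lemma field_differentiable_eq_on_open:
  assumes "f field_differentiable (at x)" "open U" "x \<in> U" "\<And>y. y \<in> U \<Longrightarrow> f y = g y"
  shows "g field_differentiable (at x)"
  using assms has_field_derivative_transform_within_open unfolding field_differentiable_def by metis

lemma higher_differentiable_on_cong:
  assumes "open U" "\<And>y. y \<in> U \<Longrightarrow> f y = g y"
  shows "higher_differentiable_on n f U \<longleftrightarrow> higher_differentiable_on n g U"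
proof -
  have "(deriv ^^ i) f y = (deriv ^^ i) g y" if "y \<in> U" for i y
    using assms that by (rule higher_deriv_eq_on_open)
  then show ?thesis
    unfolding higher_differentiable_on_def
    using field_differentiable_eq_on_open[OF _ assms(1)] by metis
qed

lemma higher_differentiable_on_const: "higher_differentiable_on n (\<lambda>x. c) U"
  by (simp add: higher_differentiable_on_def)

lemma higher_deriv_add_on:
  assumes U: "open U" "x \<in> U"
    and f: "higher_differentiable_on n f U" and g: "higher_differentiable_on n g U"
  shows "(deriv ^^ n) (\<lambda>y. f y + g y) x = (deriv ^^ n) f x + (deriv ^^ n) g x"
  using U(2) f g
proof (induction n arbitrary: x)
  case (Suc n)
  have "((\<lambda>y. (deriv ^^ n) f y + (deriv ^^ n) g y) has_field_derivative
          deriv ((deriv ^^ n) f) x + deriv ((deriv ^^ n) g) x) (at x)"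
    using Suc.prems by (intro DERIV_add higher_differentiable_onD) auto
  then have "((deriv ^^ n) (\<lambda>y. f y + g y) has_field_derivative
          deriv ((deriv ^^ n) f) x + deriv ((deriv ^^ n) g) x) (at x)"
  proof (rule has_field_derivative_transform_within_open[OF _ U(1) Suc.prems(1)])
    have "higher_differentiable_on n f U" "higher_differentiable_on n g U"
      using Suc.prems higher_differentiable_on_mono le_SucI by blast+
    then show "(deriv ^^ n) f y + (deriv ^^ n) g y = (deriv ^^ n) (\<lambda>y. f y + g y) y"
      if "y \<in> U" for y
      using Suc.IH that by simp
  qed
  then show ?case
    by (simp add: DERIV_imp_deriv)
qed simp

lemma higher_deriv_mult_on:
  assumes U: "open U" "x \<in> U"
    and f: "higher_differentiable_on n f U" and g: "higher_differentiable_on n g U"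
  shows "(deriv ^^ n) (\<lambda>y. f y * g y) x =
           (\<Sum>i\<le>n. of_nat (n choose i) * (deriv ^^ i) f x * (deriv ^^ (n - i)) g x)"
  using U(2) f g
proof (induction n arbitrary: x)
  case (Suc n)
  have IH: "(deriv ^^ n) (\<lambda>y. f y * g y) y =
              (\<Sum>i\<le>n. of_nat (n choose i) * (deriv ^^ i) f y * (deriv ^^ (n - i)) g y)"
    if "y \<in> U" for y
    using Suc higher_differentiable_on_mono[OF _ le_SucI] that by blast
  have "((\<lambda>y. \<Sum>i\<le>n. of_nat (n choose i) * ((deriv ^^ i) f y * (deriv ^^ (n - i)) g y))
          has_field_derivative
          (\<Sum>i\<le>n. of_nat (n choose i) * (deriv ((deriv ^^ i) f) x * (deriv ^^ (n - i)) g x +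
                                         deriv ((deriv ^^ (n - i)) g) x * (deriv ^^ i) f x))) (at x)"
    using Suc.prems
    by (intro DERIV_sum DERIV_cmult DERIV_mult higher_differentiable_onD) auto
  also have "(\<Sum>i\<le>n. of_nat (n choose i) * (deriv ((deriv ^^ i) f) x * (deriv ^^ (n - i)) g x +
                                            deriv ((deriv ^^ (n - i)) g) x * (deriv ^^ i) f x)) =
             (\<Sum>i\<le>Suc n. of_nat (Suc n choose i) * (deriv ^^ i) f x * (deriv ^^ (Suc n - i)) g x)"
    apply (simp add: Suc_choose algebra_simps sum.distrib atMost_atLeast0)
    apply (subst (4) sum_Suc_reindex)
    apply (auto simp: algebra_simps Suc_diff_le intro: sum.cong)
    done
  finally have "((deriv ^^ n) (\<lambda>y. f y * g y) has_field_derivative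
         (\<Sum>i\<le>Suc n. of_nat (Suc n choose i) * (deriv ^^ i) f x * (deriv ^^ (Suc n - i)) g x)) (at x)"
    by (rule has_field_derivative_transform_within_open[OF _ U(1) Suc.prems(1)])
      (simp add: IH mult.assoc)
  then show ?case
    by (simp only: funpow.simps o_apply DERIV_imp_deriv)
qed simp

lemma higher_differentiable_on_add:
  assumes U: "open U"
    and f: "higher_differentiable_on n f U" and g: "higher_differentiable_on n g U"
  shows "higher_differentiable_on n (\<lambda>y. f y + g y) U"
  unfolding higher_differentiable_on_def
proof (intro allI impI ballI)
  fix i x assume i: "i < n" and x: "x \<in> U"
  have fi: "higher_differentiable_on i f U" and gi: "higher_differentiable_on i g U"
    using f g i higher_differentiable_on_mono by (metis less_imp_le)+
  have "(\<lambda>y. (deriv ^^ i) f y + (deriv ^^ i) g y) field_differentiable (at x)"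
    using f g i x by (intro field_differentiable_add) (auto simp: higher_differentiable_on_def)
  then show "(deriv ^^ i) (\<lambda>y. f y + g y) field_differentiable (at x)"
    by (rule field_differentiable_eq_on_open[OF _ U x]) (simp add: higher_deriv_add_on[OF U _ fi gi])
qed

lemma higher_differentiable_on_mult:
  assumes U: "open U"
    and f: "higher_differentiable_on n f U" and g: "higher_differentiable_on n g U"
  shows "higher_differentiable_on n (\<lambda>y. f y * g y) U"
  unfolding higher_differentiable_on_def
proof (intro allI impI ballI)
  fix i x assume i: "i < n" and x: "x \<in> U"
  have fi: "higher_differentiable_on i f U" and gi: "higher_differentiable_on i g U"
    using f g i higher_differentiable_on_mono by (metis less_imp_le)+
  have "(\<lambda>y. \<Sum>j\<le>i. of_nat (i choose j) * (deriv ^^ j) f y * (deriv ^^ (i - j)) g y)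
          field_differentiable (at x)"
    using f g i x
    by (intro field_differentiable_sum field_differentiable_mult field_differentiable_const)
       (auto simp: higher_differentiable_on_def)
  then show "(deriv ^^ i) (\<lambda>y. f y * g y) field_differentiable (at x)"
    by (rule field_differentiable_eq_on_open[OF _ U x]) (simp add: higher_deriv_mult_on[OF U _ fi gi])
qed

lemma higher_differentiable_on_quadratic_ode:
  assumes U: "open U"
    and f': "\<And>x. x \<in> U \<Longrightarrow> (f has_field_derivative a + b * f x * f x) (at x)"
  shows "higher_differentiable_on n f U"
proof (induction n)
  case 0
  then show ?case
    by (simp add: higher_differentiable_on_def)
next
  case (Suc n)
  have "higher_differentiable_on n (\<lambda>x. b * f x) U"
    by (rule higher_differentiable_on_mult[OF U higher_differentiable_on_const Suc.IH])
  then have "higher_differentiable_on n (\<lambda>x. b * f x * f x) U"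
    by (rule higher_differentiable_on_mult[OF U _ Suc.IH])
  then have "higher_differentiable_on n (\<lambda>x. a + b * f x * f x) U"
    by (rule higher_differentiable_on_add[OF U higher_differentiable_on_const])
  moreover have "deriv f x = a + b * f x * f x" if "x \<in> U" for x
    using f'[OF that] by (rule DERIV_imp_deriv)
  ultimately have "higher_differentiable_on n (deriv f) U"
    by (simp add: higher_differentiable_on_cong[OF U, of "deriv f"])
  moreover have "f field_differentiable (at x)" if "x \<in> U" for x
    using f'[OF that] unfolding field_differentiable_def by blast
  ultimately show ?case
    unfolding higher_differentiable_on_Suc by blast
qed

lemma higher_deriv_eq_bell_complete:
  fixes S f :: "real \<Rightarrow> real"
  assumes U: "open U" "k \<in> U"
    and S: "\<And>n. higher_differentiable_on n S U" and f: "\<And>n. higher_differentiable_on n f U"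
    and S': "\<And>x. x \<in> U \<Longrightarrow> deriv S x = S x * f x"
  shows "(deriv ^^ n) S k = bell_complete n (\<lambda>i. (deriv ^^ (i - 1)) f k) * S k"
proof (induction n rule: less_induct)
  case (less n)
  show ?case
  proof (cases n)
    case 0
    then show ?thesis by simp
  next
    case (Suc m)
    have "(deriv ^^ n) S k = (deriv ^^ m) (deriv S) k"
      by (simp add: Suc funpow_Suc_right del: funpow.simps)
    also have "\<dots> = (deriv ^^ m) (\<lambda>x. S x * f x) k"
      by (rule higher_deriv_eq_on_open[OF U(1) S' U(2)])
    also have "\<dots> = (\<Sum>i\<le>m. of_nat (m choose i) * (deriv ^^ i) S k * (deriv ^^ (m - i)) f k)"
      using U S f by (rule higher_deriv_mult_on)
    also have "\<dots> = (\<Sum>i\<le>m. of_nat (m choose i) * bell_complete i (\<lambda>i. (deriv ^^ (i - 1)) f k) *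
                          (deriv ^^ (Suc (m - i) - 1)) f k) * S k"
      unfolding sum_distrib_right
      by (intro sum.cong refl) (simp add: less.IH Suc)
    also have "\<dots> = bell_complete n (\<lambda>i. (deriv ^^ (i - 1)) f k) * S k"
      by (simp only: Suc bell_complete_Suc)
    finally show ?thesis .
  qed
qed

lemma higher_deriv_sin_scaled:
  "(deriv ^^ n) (\<lambda>x. sin (x * c)) = (\<lambda>x. c ^ n * sin (x * c + real n * pi / 2))"
proof (induction n)
  case (Suc n)
  have "sin (x * c + real (Suc n) * pi / 2) = cos (x * c + real n * pi / 2)" for x
    using sin_add[of "x * c + real n * pi / 2" "pi / 2"] by (simp add: field_simps)
  then have "((\<lambda>x. c ^ n * sin (x * c + real n * pi / 2)) has_real_derivative
          c ^ Suc n * sin (x * c + real (Suc n) * pi / 2)) (at x)" for x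
    by (auto intro!: derivative_eq_intros)
  then have "deriv (\<lambda>x. c ^ n * sin (x * c + real n * pi / 2)) x =
               c ^ Suc n * sin (x * c + real (Suc n) * pi / 2)" for x
    by (rule DERIV_imp_deriv)
  then show ?case
    by (simp add: Suc del: of_nat_Suc power_Suc)
qed simp

(* The derivative is written in the form a + b f f of higher_differentiable_on_quadratic_ode. *)
lemma has_real_derivative_pi_cot:
  assumes "sin (x * pi) \<noteq> 0"
  shows "((\<lambda>x. pi * cot (x * pi)) has_real_derivative
           - (pi ^ 2) + - 1 * (pi * cot (x * pi)) * (pi * cot (x * pi))) (at x)"
proof -
  have "((\<lambda>x. pi * cot (x * pi)) has_real_derivative pi * (- inverse ((sin (x * pi))\<^sup>2) * pi)) (at x)"
    using assms by (auto intro!: derivative_eq_intros DERIV_chain2[OF DERIV_cot])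
  moreover have "pi * (- inverse ((sin (x * pi))\<^sup>2) * pi) =
                   - (pi ^ 2) + - 1 * (pi * cot (x * pi)) * (pi * cot (x * pi))"
    using assms sin_cos_squared_add3[of "x * pi"]
    by (simp add: cot_def field_simps power2_eq_square flip: distrib_left)
  ultimately show ?thesis by simp
qed

lemma sin_times_pi_eq_0_iff: "sin (x * pi) = 0 \<longleftrightarrow> x \<in> \<int>"
  by (auto simp: sin_zero_iff_int2 elim!: Ints_cases)

lemma sin_add_multiple_half_pi:
  "sin (x + real (2 * j) * pi / 2) = (- 1) ^ j * sin x"
  "sin (x + real (2 * j + 1) * pi / 2) = (- 1) ^ j * cos x"
proof -
  have "sin (x + real (2 * j) * pi / 2) = sin (x + real j * pi)"
    "sin (x + real (2 * j + 1) * pi / 2) = sin ((x + pi / 2) + real j * pi)"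
    by (simp_all add: field_simps)
  then show "sin (x + real (2 * j) * pi / 2) = (- 1) ^ j * sin x"
    "sin (x + real (2 * j + 1) * pi / 2) = (- 1) ^ j * cos x"
    by (simp_all only: sin_add cos_add) simp_all
qed

theorem lemma2:
  fixes k :: real and j :: nat
  assumes "k \<notin> \<int>"
  defines "\<nu> \<equiv> (\<lambda>i::nat. (deriv ^^ (i - 1)) (\<lambda>x. pi * cot (x * pi)) k)"
  shows "bell_complete (2 * j) \<nu> = (-1) ^ j * pi ^ (2 * j) \<and>
         bell_complete (2 * j + 1) \<nu> = (-1) ^ j * pi ^ (2 * j + 1) * cot (k * pi)"
proof -
  define S where "S = (\<lambda>x::real. sin (x * pi))"
  define f where "f = (\<lambda>x::real. pi * cot (x * pi))"
  define U where "U = - (\<int> :: real set)"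
  have U: "open U" "k \<in> U"
    using assms(1) by (auto simp: U_def)
  have S_nonzero: "S x \<noteq> 0" if "x \<in> U" for x
    using that by (simp add: S_def U_def sin_times_pi_eq_0_iff)
  have "(\<lambda>x. c * sin (x * pi + a)) field_differentiable (at x)" for a c x :: real
    unfolding field_differentiable_def by (auto intro!: derivative_eq_intros exI)
  then have "higher_differentiable_on n S U" for n
    by (simp add: higher_differentiable_on_def S_def higher_deriv_sin_scaled)
  moreover have "higher_differentiable_on n f U" for n
    unfolding f_def using U(1)
    by (rule higher_differentiable_on_quadratic_ode)
       (use S_nonzero in \<open>auto simp: S_def intro: has_real_derivative_pi_cot\<close>)
  moreover have "deriv S x = S x * f x" if "x \<in> U" for x
    using higher_deriv_sin_scaled[of 1 pi] S_nonzero[OF that]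
    by (simp add: S_def f_def cot_def sin_add)
  ultimately have "(deriv ^^ n) S k = bell_complete n \<nu> * S k" for n
    unfolding \<nu>_def f_def by (rule higher_deriv_eq_bell_complete[OF U])
  then have "bell_complete n \<nu> = pi ^ n * sin (k * pi + real n * pi / 2) / sin (k * pi)" for n
    using S_nonzero[OF U(2)] by (simp add: S_def higher_deriv_sin_scaled field_simps)
  then show ?thesis
    using S_nonzero[OF U(2)] by (simp only: sin_add_multiple_half_pi) (simp add: S_def cot_def)
qed

end
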